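(* Let $\Delta:M_n\to M_n$ be a weak-2-local derivation, let $p_1,\ldots,p_n$ be mutually orthogonal minimal projections in $M_n$, and let $q=1-p_n$. Suppose that $\Delta$ is symmetric (i.e. $\Delta(a^* )^*=\Delta(a)$ for all $a\in M_n$) and $\Delta(qa)=0$ for every $a\in M_n$. Then $\Delta(qa+p_naq)=0$ for every $a\in M_n$.
   Context: $M_n=M_n(\mathbb{C})$. A derivation on $M_n$ is a linear map $D$ with $D(ab)=D(a)b+aD(b)$. A (not necessarily linear) map $\Delta:M_n\to M_n$ is a weak-2-local derivation if for every $a,b\in M_n$ and every $\phi\in M_n^*$ there exists a derivation $D_{a,b,\phi}$ such that $\phi\Delta(a)=\phi D_{a,b,\phi}(a)$ and $\phi\Delta(b)=\phi D_{a,b,\phi}(b)$. *)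

theory Defs
  imports "HOL-Analysis.Analysis"
begin

text \<open>M_n(C) is rendered as the type complex^'n^'n with 'n a finite index type of size n.\<close>

type_synonym 'n cmat = "complex ^ 'n ^ 'n"

definition cmat_scale :: "complex \<Rightarrow> 'n::finite cmat \<Rightarrow> 'n cmat" where
  "cmat_scale c A = (\<chi> i j. c * A $ i $ j)"

definition cmat_adj :: "'n::finite cmat \<Rightarrow> 'n cmat" where
  "cmat_adj A = (\<chi> i j. cnj (A $ j $ i))"

definition is_derivation :: "('n::finite cmat \<Rightarrow> 'n cmat) \<Rightarrow> bool" where
  "is_derivation D \<longleftrightarrow>
     (\<forall>A B. D (A + B) = D A + D B) \<and>
     (\<forall>c A. D (cmat_scale c A) = cmat_scale c (D A)) \<and>
     (\<forall>A B. D (A ** B) = D A ** B + A ** D B)"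

definition cmat_functional :: "('n::finite cmat \<Rightarrow> complex) \<Rightarrow> bool" where
  "cmat_functional phi \<longleftrightarrow>
     (\<forall>A B. phi (A + B) = phi A + phi B) \<and>
     (\<forall>c A. phi (cmat_scale c A) = c * phi A)"

definition weak_2_local_derivation :: "('n::finite cmat \<Rightarrow> 'n cmat) \<Rightarrow> bool" where
  "weak_2_local_derivation \<Delta> \<longleftrightarrow>
     (\<forall>a b phi. cmat_functional phi \<longrightarrow>
        (\<exists>D. is_derivation D \<and> phi (\<Delta> a) = phi (D a) \<and> phi (\<Delta> b) = phi (D b)))"

definition is_projection :: "'n::finite cmat \<Rightarrow> bool" where
  "is_projection p \<longleftrightarrow> cmat_adj p = p \<and> p ** p = p"

text \<open>Minimal projection: nonzero projection with no subprojection other than 0 and itself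
  (e \<le> p for projections means e = e p).\<close>
definition minimal_projection :: "'n::finite cmat \<Rightarrow> bool" where
  "minimal_projection p \<longleftrightarrow> is_projection p \<and> p \<noteq> 0 \<and>
     (\<forall>e. is_projection e \<and> e ** p = e \<longrightarrow> e = 0 \<or> e = p)"

end

theory Submission
  imports Defs
begin

text \<open>Write \<open>P = p k\<close> and \<open>Q = 1 - P\<close>, so every matrix splits into the four corners
  \<open>P Z P\<close>, \<open>P Z Q\<close>, \<open>Q Z P\<close>, \<open>Q Z Q\<close>. By symmetry \<open>\<Delta>\<close> kills both \<open>Q b\<close> and \<open>b Q\<close>, and
  \<open>x = Q a + P a Q\<close> differs from such elements only by \<open>Q a P\<close>, \<open>P a Q\<close> or \<open>P a Q + Q\<close>.
  Testing \<open>\<Delta> x\<close> against a linear functional \<open>\<phi>\<close> together with such an element \<open>y\<close> replaces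
  \<open>\<phi> (\<Delta> x)\<close> by \<open>\<phi> (D (x - y))\<close> for an honest derivation \<open>D\<close>; choosing \<open>\<phi>\<close> as a corner of a
  trace functional shows that the corners \<open>P \<Delta>(x) Q\<close>, \<open>Q \<Delta>(x) P\<close>, \<open>Q \<Delta>(x) Q\<close> and the trace
  of \<open>\<Delta> x\<close> vanish. Hence \<open>\<Delta> x = P \<Delta>(x) P\<close> is a traceless element of the corner of a rank-one
  projection, i.e. zero.\<close>

lemma matrix_add_rdistrib: "((A::'a::semiring_1^'n^'m) + B) ** C = A ** C + B ** C"
  by (vector matrix_matrix_mult_def sum.distrib[symmetric] field_simps)

lemma matrix_diff_ldistrib: "(A::'a::ring_1^'n^'m) ** (B - C) = A ** B - A ** C"
  by (vector matrix_matrix_mult_def sum_subtractf[symmetric] field_simps)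

lemma matrix_diff_rdistrib: "((A::'a::ring_1^'n^'m) - B) ** C = A ** C - B ** C"
  by (vector matrix_matrix_mult_def sum_subtractf[symmetric] field_simps)

lemma matrix_neg_left: "(- (A::'a::ring_1^'n^'m)) ** C = - (A ** C)"
  by (vector matrix_matrix_mult_def sum_negf[symmetric] field_simps)

lemma matrix_neg_right: "(A::'a::ring_1^'n^'m) ** (- C) = - (A ** C)"
  by (vector matrix_matrix_mult_def sum_negf[symmetric] field_simps)

lemma cmat_scale_mult_left: "cmat_scale c A ** B = cmat_scale c (A ** B)"
  by (simp add: cmat_scale_def matrix_matrix_mult_def vec_eq_iff sum_distrib_left mult.assoc)

lemma cmat_scale_mult_right: "A ** cmat_scale c B = cmat_scale c (A ** B)"
  by (simp add: cmat_scale_def matrix_matrix_mult_def vec_eq_iff sum_distrib_left mult_ac)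

lemma trace_zero [simp]: "trace (0::'a::semiring_1^'n^'n) = 0"
  by (simp add: trace_def)

lemma trace_cmat_scale: "trace (cmat_scale c A) = c * trace A"
  by (simp add: cmat_scale_def trace_def sum_distrib_left)

lemma cmat_adj_mult: "cmat_adj (A ** B) = cmat_adj B ** cmat_adj A"
  by (simp add: cmat_adj_def matrix_matrix_mult_def vec_eq_iff mult.commute)

lemma cmat_adj_0 [simp]: "cmat_adj 0 = 0"
  by (simp add: cmat_adj_def vec_eq_iff)

lemma cmat_adj_diff: "cmat_adj (A - B) = cmat_adj A - cmat_adj B"
  by (simp add: cmat_adj_def vec_eq_iff)

lemma cmat_adj_mat_1 [simp]: "cmat_adj (mat 1 :: 'n::finite cmat) = mat 1"
  by (simp add: cmat_adj_def vec_eq_iff mat_def)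

lemma matrix_unit_mult_nth:
  "((\<chi> a b. if a = j \<and> b = i then 1 else 0) ** Z) $ a $ c = (if a = j then Z $ i $ c else 0)"
  by (simp add: matrix_matrix_mult_def if_distrib if_distribR cong: if_cong)

lemma trace_matrix_unit_mult:
  "trace ((\<chi> a b. if a = j \<and> b = i then 1 else 0) ** Z) = (Z $ i $ j :: 'a::semiring_1)"
  by (simp add: trace_def matrix_unit_mult_nth)

lemma matrix_eq_0_if_trace_mult_eq_0:
  fixes M :: "'a::semiring_1^'n^'n"
  assumes "\<And>E. trace (E ** M) = 0"
  shows "M = 0"
  using assms trace_matrix_unit_mult by (metis vec_eq_iff zero_index)

lemma cmat_functional_trace_mult: "cmat_functional (\<lambda>Z. trace ((A::'n::finite cmat) ** Z ** B))"
  unfolding cmat_functional_def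
  by (simp add: matrix_add_ldistrib matrix_add_rdistrib trace_add cmat_scale_mult_left
      cmat_scale_mult_right trace_cmat_scale)

lemma cmat_functional_0: "cmat_functional \<phi> \<Longrightarrow> \<phi> 0 = 0"
  unfolding cmat_functional_def by (metis add_cancel_right_right)

lemma derivation_add: "is_derivation D \<Longrightarrow> D (A + B) = D A + D B"
  unfolding is_derivation_def by blast

lemma derivation_mult: "is_derivation D \<Longrightarrow> D (A ** B) = D A ** B + A ** D B"
  unfolding is_derivation_def by blast

lemma derivation_diff: "is_derivation D \<Longrightarrow> D (A - B) = D A - D B"
  using derivation_add[of D "A - B" B] by simp

lemma derivation_mat_1: "is_derivation D \<Longrightarrow> D (mat 1) = 0"
  using derivation_mult[of D "mat 1" "mat 1"] by simp

lemma idempotent_mult_complement: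
  "P ** P = P \<Longrightarrow> P ** (mat 1 - P) = (0::'a::ring_1^'n^'n)"
  by (simp add: matrix_diff_ldistrib)

lemma complement_mult_idempotent:
  "P ** P = P \<Longrightarrow> (mat 1 - P) ** P = (0::'a::ring_1^'n^'n)"
  by (simp add: matrix_diff_rdistrib)

lemma complement_idempotent:
  "P ** P = P \<Longrightarrow> (mat 1 - P) ** (mat 1 - P) = (mat 1 - P :: 'a::ring_1^'n^'n)"
  by (simp add: matrix_diff_ldistrib matrix_diff_rdistrib)

lemma derivation_idempotent_complement_corner:
  assumes "is_derivation D" and idem: "P ** P = P"
  shows "(mat 1 - P) ** D P ** (mat 1 - P) = 0"
proof -
  let ?Q = "mat 1 - P"
  have "D P = D P ** P + P ** D P"
    using derivation_mult[OF assms(1)] idem by metis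
  then have "?Q ** D P ** ?Q = ?Q ** (D P ** P + P ** D P) ** ?Q"
    by simp
  also have "\<dots> = ?Q ** D P ** (P ** ?Q) + (?Q ** P) ** D P ** ?Q"
    by (simp only: matrix_add_ldistrib matrix_add_rdistrib matrix_mul_assoc)
  also have "\<dots> = 0"
    by (simp add: idempotent_mult_complement complement_mult_idempotent idem)
  finally show ?thesis .
qed

lemma derivation_idempotent_complement_mult:
  assumes "is_derivation D" and "P ** P = P"
  shows "(mat 1 - P) ** D P = D P ** P"
proof -
  have "D P = D P ** P + P ** D P"
    using derivation_mult[OF assms(1)] assms(2) by metis
  then show ?thesis by (simp add: matrix_diff_rdistrib algebra_simps)
qed

lemma weak_2_local_derivation_functional_eq_0:
  assumes "weak_2_local_derivation \<Delta>" and "cmat_functional \<phi>" and "\<Delta> y = 0"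
    and "\<And>D. is_derivation D \<Longrightarrow> \<phi> (D (x - y)) = 0"
  shows "\<phi> (\<Delta> x) = 0"
proof -
  obtain D where D: "is_derivation D" "\<phi> (\<Delta> x) = \<phi> (D x)" "\<phi> (\<Delta> y) = \<phi> (D y)"
    using assms(1,2) unfolding weak_2_local_derivation_def by blast
  have "D x = D (x - y) + D y"
    using derivation_add[OF D(1), of "x - y" y] by simp
  then have "\<phi> (D x) = \<phi> (D (x - y)) + \<phi> (D y)"
    using assms(2) unfolding cmat_functional_def by simp
  then show ?thesis
    using D assms(3,4) cmat_functional_0[OF assms(2)] by simp
qed

lemma weak_2_local_derivation_corner_eq_0:
  fixes \<Delta> :: "'n::finite cmat \<Rightarrow> 'n cmat" and A B :: "'n cmat"
  assumes "weak_2_local_derivation \<Delta>" and "\<Delta> y = 0"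
    and "\<And>D. is_derivation D \<Longrightarrow> A ** D (x - y) ** B = 0"
  shows "A ** \<Delta> x ** B = 0"
proof (rule matrix_eq_0_if_trace_mult_eq_0)
  fix E
  have "cmat_functional (\<lambda>Z. trace (E ** (A ** Z ** B)))"
    using cmat_functional_trace_mult[of "E ** A" B] by (simp add: matrix_mul_assoc)
  then show "trace (E ** (A ** \<Delta> x ** B)) = 0"
    by (rule weak_2_local_derivation_functional_eq_0[OF assms(1) _ assms(2)]) (simp add: assms(3))
qed

lemma weak_2_local_derivation_trace_eq_0:
  fixes \<Delta> :: "'n::finite cmat \<Rightarrow> 'n cmat"
  assumes "weak_2_local_derivation \<Delta>" and "\<Delta> y = 0"
    and "\<And>D. is_derivation D \<Longrightarrow> trace (D (x - y)) = 0"
  shows "trace (\<Delta> x) = 0"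
proof -
  have "trace (mat 1 ** \<Delta> x ** mat 1) = 0"
    using cmat_functional_trace_mult
    by (rule weak_2_local_derivation_functional_eq_0[OF assms(1) _ assms(2)]) (simp add: assms(3))
  then show ?thesis by simp
qed

lemma symmetric_map_vanishes_right_mult:
  assumes "\<And>a. cmat_adj (\<Delta> (cmat_adj a)) = \<Delta> a" and "cmat_adj Q = Q"
    and "\<And>b. \<Delta> (Q ** b) = 0"
  shows "\<Delta> (b ** Q) = 0"
proof -
  have "\<Delta> (b ** Q) = cmat_adj (\<Delta> (Q ** cmat_adj b))"
    using assms(1)[of "b ** Q"] by (simp add: cmat_adj_mult assms(2))
  then show ?thesis
    by (simp add: assms(3))
qed

subsection \<open>Minimal projections have rank one\<close>

definition cmat_outer :: "('n::finite \<Rightarrow> complex) \<Rightarrow> ('n \<Rightarrow> complex) \<Rightarrow> 'n cmat" where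
  "cmat_outer u w = (\<chi> a b. u a * w b)"

lemma cmat_outer_compression:
  "cmat_outer u w ** M ** cmat_outer u w =
     cmat_scale (\<Sum>c\<in>UNIV. \<Sum>d\<in>UNIV. w c * M $ c $ d * u d) (cmat_outer u w)"
  by (simp add: cmat_outer_def cmat_scale_def matrix_matrix_mult_def vec_eq_iff
      sum_distrib_left sum_distrib_right mult_ac) (intro allI sum.swap)

lemma cmat_outer_square:
  "cmat_outer u w ** cmat_outer u w = cmat_scale (\<Sum>c\<in>UNIV. w c * u c) (cmat_outer u w)"
  by (simp add: cmat_outer_def cmat_scale_def matrix_matrix_mult_def vec_eq_iff
      sum_distrib_left sum_distrib_right mult_ac)

lemma trace_cmat_outer: "trace (cmat_outer u w) = (\<Sum>c\<in>UNIV. w c * u c)"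
  by (simp add: cmat_outer_def trace_def mult.commute)

lemma cmat_scale_eq_self_iff: "cmat_scale c A = A \<longleftrightarrow> c = 1 \<or> A = 0"
  by (auto simp: cmat_scale_def vec_eq_iff)

lemma trace_idempotent_cmat_outer:
  assumes "cmat_outer u w ** cmat_outer u w = cmat_outer u w" and "cmat_outer u w \<noteq> 0"
  shows "trace (cmat_outer u w) = 1"
proof -
  have "cmat_scale (\<Sum>c\<in>UNIV. w c * u c) (cmat_outer u w) = cmat_outer u w"
    using cmat_outer_square[of u w] assms(1) by simp
  then show ?thesis
    using assms(2) by (simp add: cmat_scale_eq_self_iff trace_cmat_outer)
qed

lemma projection_cnj_entry:
  assumes "is_projection p"
  shows "cnj (p $ a $ b) = p $ b $ a"
proof -
  have "cmat_adj p $ b $ a = p $ b $ a"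
    using assms by (simp add: is_projection_def)
  then show ?thesis
    by (simp add: cmat_adj_def)
qed

lemma projection_entry_mult:
  assumes "is_projection p"
  shows "(\<Sum>k\<in>UNIV. p $ a $ k * p $ k $ b) = p $ a $ b"
proof -
  have "(p ** p) $ a $ b = p $ a $ b"
    using assms by (simp add: is_projection_def)
  then show ?thesis
    by (simp add: matrix_matrix_mult_def)
qed

lemma projection_diagonal_entry:
  assumes "is_projection p"
  shows "p $ j $ j = of_real (\<Sum>k\<in>UNIV. (cmod (p $ k $ j))\<^sup>2)"
proof -
  have "p $ j $ j = (\<Sum>k\<in>UNIV. cnj (p $ k $ j) * p $ k $ j)"
    using projection_entry_mult[OF assms, of j j] by (simp add: projection_cnj_entry[OF assms])
  also have "\<dots> = of_real (\<Sum>k\<in>UNIV. (cmod (p $ k $ j))\<^sup>2)"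
    by (simp only: of_real_sum complex_norm_square) (simp add: mult.commute)
  finally show ?thesis .
qed

lemma projection_diagonal_nonzero:
  assumes "is_projection p" and "p \<noteq> 0"
  obtains j where "p $ j $ j \<noteq> 0"
proof -
  obtain k j where "p $ k $ j \<noteq> 0"
    using assms(2) by (metis vec_eq_iff zero_index)
  then have "(\<Sum>k\<in>UNIV. (cmod (p $ k $ j))\<^sup>2) \<noteq> 0"
    by (subst sum_nonneg_eq_0_iff) auto
  then show ?thesis
    using that projection_diagonal_entry[OF assms(1)] by (metis of_real_eq_0_iff)
qed

text \<open>The witness is the rank-one subprojection spanned by a column \<open>j\<close> with \<open>p\<^sub>j\<^sub>j \<noteq> 0\<close>.\<close>

lemma minimal_projection_rank_one:
  assumes "minimal_projection p"
  obtains u w where "p = cmat_outer u w"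
proof -
  have proj: "is_projection p" and "p \<noteq> 0"
    using assms unfolding minimal_projection_def by auto
  then obtain j where j: "p $ j $ j \<noteq> 0"
    by (rule projection_diagonal_nonzero)
  define e where "e = cmat_outer (\<lambda>a. p $ a $ j) (\<lambda>b. p $ j $ b / p $ j $ j)"
  have "(\<Sum>c\<in>UNIV. p $ j $ c / p $ j $ j * p $ c $ j) = 1"
    using j projection_entry_mult[OF proj, of j j] by (simp add: sum_divide_distrib[symmetric])
  then have "e ** e = e"
    unfolding e_def cmat_outer_square by (simp add: cmat_scale_def cmat_outer_def vec_eq_iff)
  moreover have "cmat_adj e = e"
    using projection_cnj_entry[OF proj]
    by (simp add: e_def cmat_outer_def cmat_adj_def vec_eq_iff mult.commute)
  moreover have "e ** p = e"
  proof -
    have "(e ** p) $ a $ b = p $ a $ j / p $ j $ j * (\<Sum>k\<in>UNIV. p $ j $ k * p $ k $ b)" for a b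
      by (simp add: e_def cmat_outer_def matrix_matrix_mult_def sum_distrib_left mult_ac)
    then show ?thesis
      by (simp add: projection_entry_mult[OF proj] e_def cmat_outer_def vec_eq_iff)
  qed
  moreover have "e \<noteq> 0"
    using j by (auto simp: e_def cmat_outer_def vec_eq_iff)
  ultimately have "p = e"
    using assms unfolding minimal_projection_def is_projection_def by blast
  then show ?thesis
    using that unfolding e_def by blast
qed

lemma minimal_projection_corner_eq_0:
  assumes "minimal_projection p" and "p ** M ** p = M" and "trace M = 0"
  shows "M = 0"
proof -
  obtain u w where p: "p = cmat_outer u w"
    using assms(1) by (rule minimal_projection_rank_one)
  define s where "s = (\<Sum>c\<in>UNIV. \<Sum>d\<in>UNIV. w c * M $ c $ d * u d)"
  have M: "M = cmat_scale s p"
    using assms(2) cmat_outer_compression[of u w M] unfolding p s_def by simp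
  have "trace p = 1"
    using assms(1) unfolding p minimal_projection_def is_projection_def
    by (blast intro: trace_idempotent_cmat_outer)
  then have "s = 0"
    using assms(3) by (simp add: M trace_cmat_scale)
  then show ?thesis
    by (simp add: M cmat_scale_def vec_eq_iff)
qed

locale weak_2_local_derivation_vanishing_beside =
  fixes \<Delta> :: "'n::finite cmat \<Rightarrow> 'n cmat" and P :: "'n cmat"
  assumes weak_2_local: "weak_2_local_derivation \<Delta>"
    and idempotent: "P ** P = P"
    and vanishes_left: "\<And>b. \<Delta> ((mat 1 - P) ** b) = 0"
    and vanishes_right: "\<And>b. \<Delta> (b ** (mat 1 - P)) = 0"
begin

definition Q :: "'n cmat" where "Q = mat 1 - P"

lemma P_mult_Q: "P ** Q = 0"
  unfolding Q_def by (rule idempotent_mult_complement[OF idempotent])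

lemma Q_mult_P: "Q ** P = 0"
  unfolding Q_def by (rule complement_mult_idempotent[OF idempotent])

lemma Q_mult_Q: "Q ** Q = Q"
  unfolding Q_def by (rule complement_idempotent[OF idempotent])

lemmas corner_simps = matrix_mul_assoc matrix_add_ldistrib matrix_add_rdistrib
  matrix_diff_ldistrib matrix_diff_rdistrib idempotent P_mult_Q Q_mult_P Q_mult_Q
  matrix_mul_assoc[of _ P P, symmetric, unfolded idempotent]
  matrix_mul_assoc[of _ Q Q, symmetric, unfolded Q_mult_Q]
  matrix_mul_assoc[of _ P Q, symmetric, unfolded P_mult_Q times0_right]
  matrix_mul_assoc[of _ Q P, symmetric, unfolded Q_mult_P times0_right]

lemma diff_mult_Q: "Z - Z ** Q = Z ** P"
  unfolding Q_def by (simp add: matrix_diff_ldistrib)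

lemma diff_Q_mult: "Z - Q ** Z = P ** Z"
  unfolding Q_def by (simp add: matrix_diff_rdistrib)

lemma derivation_Q: "is_derivation D \<Longrightarrow> D Q = - D P"
  unfolding Q_def by (simp add: derivation_diff derivation_mat_1)

lemma Q_derivation_P_Q:
  "is_derivation D \<Longrightarrow> Q ** D P ** Q = 0"
  unfolding Q_def by (rule derivation_idempotent_complement_corner[OF _ idempotent])

lemma Q_derivation_P:
  "is_derivation D \<Longrightarrow> Q ** D P = D P ** P"
  unfolding Q_def by (rule derivation_idempotent_complement_mult[OF _ idempotent])

lemma Q_derivation_P_P:
  "is_derivation D \<Longrightarrow> Q ** D P ** P = Q ** D P"
  by (metis Q_derivation_P idempotent matrix_mul_assoc)

lemma corner_P_Q: "P ** \<Delta> (Q ** a + P ** a ** Q) ** Q = 0"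
proof (rule weak_2_local_derivation_corner_eq_0[OF weak_2_local vanishes_right, folded Q_def])
  fix D :: "'n cmat \<Rightarrow> 'n cmat"
  assume D: "is_derivation D"
  have "Q ** a + P ** a ** Q - (Q ** a + P ** a ** Q) ** Q = Q ** a ** P"
    by (simp only: diff_mult_Q) (simp add: corner_simps)
  moreover have "P ** D (Q ** a ** P) ** Q = 0"
    by (simp add: derivation_mult[OF D] corner_simps)
  ultimately show "P ** D (Q ** a + P ** a ** Q - (Q ** a + P ** a ** Q) ** Q) ** Q = 0"
    by simp
qed

lemma corner_Q_P: "Q ** \<Delta> (Q ** a + P ** a ** Q) ** P = 0"
proof (rule weak_2_local_derivation_corner_eq_0[OF weak_2_local vanishes_left, folded Q_def])
  fix D :: "'n cmat \<Rightarrow> 'n cmat"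
  assume D: "is_derivation D"
  have "Q ** a + P ** a ** Q - Q ** (Q ** a + P ** a ** Q) = P ** a ** Q"
    by (simp only: diff_Q_mult) (simp add: corner_simps)
  moreover have "Q ** D (P ** a ** Q) ** P = 0"
    by (simp add: derivation_mult[OF D] corner_simps)
  ultimately show "Q ** D (Q ** a + P ** a ** Q - Q ** (Q ** a + P ** a ** Q)) ** P = 0"
    by simp
qed

text \<open>Here \<open>\<Delta>\<close> is compared with its zero at \<open>Q (a - 1)\<close>, which differs from the argument by
  \<open>P a Q + Q\<close>; the corner \<open>Q Z (Q + P a Q)\<close> is the one that every derivation kills on that
  difference, and its extra term \<open>Q \<Delta>(x) P a Q\<close> vanishes by \<open>corner_Q_P\<close>.\<close>

lemma corner_Q_Q: "Q ** \<Delta> (Q ** a + P ** a ** Q) ** Q = 0"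
proof -
  have "Q ** \<Delta> (Q ** a + P ** a ** Q) ** (Q + P ** a ** Q) = 0"
  proof (rule weak_2_local_derivation_corner_eq_0[OF weak_2_local vanishes_left, folded Q_def])
    fix D :: "'n cmat \<Rightarrow> 'n cmat"
    assume D: "is_derivation D"
    have "Q ** a + P ** a ** Q - Q ** (a - mat 1) = P ** a ** Q + Q"
      by (simp add: matrix_diff_ldistrib)
    moreover have "Q ** D (P ** a ** Q + Q) ** (Q + P ** a ** Q) = 0"
      by (simp add: derivation_mult[OF D] derivation_add[OF D] derivation_Q[OF D]
          Q_derivation_P_Q[OF D] Q_derivation_P_P[OF D] matrix_neg_left matrix_neg_right
          corner_simps)
    ultimately show "Q ** D (Q ** a + P ** a ** Q - Q ** (a - mat 1)) ** (Q + P ** a ** Q) = 0"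
      by (simp only:)
  qed
  moreover have "Q ** \<Delta> (Q ** a + P ** a ** Q) ** (P ** a ** Q) = 0"
    using corner_Q_P by (metis matrix_mul_assoc times0_left)
  ultimately show ?thesis
    by (simp add: matrix_add_ldistrib)
qed

lemma trace_vanishes: "trace (\<Delta> (Q ** a + P ** a ** Q)) = 0"
proof (rule weak_2_local_derivation_trace_eq_0[OF weak_2_local vanishes_left, folded Q_def])
  fix D :: "'n cmat \<Rightarrow> 'n cmat"
  assume D: "is_derivation D"
  have "trace (D P ** a ** Q) = trace (D P ** P ** a)"
    by (metis trace_mul_sym matrix_mul_assoc Q_derivation_P[OF D])
  moreover have "trace (P ** D a ** Q) = 0"
    by (metis trace_mul_sym matrix_mul_assoc Q_mult_P times0_left trace_zero)
  moreover have "trace (P ** a ** D Q) = - trace (D P ** P ** a)"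
    by (metis trace_mul_sym matrix_mul_assoc derivation_Q[OF D] matrix_neg_left
        trace_sub diff_0 trace_zero)
  ultimately show "trace (D (Q ** a + P ** a ** Q - Q ** a)) = 0"
    by (simp add: derivation_mult[OF D] matrix_add_rdistrib trace_add)
qed

lemma value_in_corner: "\<Delta> (Q ** a + P ** a ** Q) = P ** \<Delta> (Q ** a + P ** a ** Q) ** P"
proof -
  have "Z = P ** Z ** P + P ** Z ** Q + (Q ** Z ** P + Q ** Z ** Q)" for Z
    by (metis diff_Q_mult diff_mult_Q diff_add_cancel)
  then show ?thesis
    using corner_P_Q corner_Q_P corner_Q_Q by (metis add.right_neutral)
qed

end

theorem lemma2p7:
  fixes \<Delta> :: "'n::finite cmat \<Rightarrow> 'n cmat"
    and p :: "'n \<Rightarrow> 'n cmat"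
    and k :: 'n
  assumes "weak_2_local_derivation \<Delta>"
    and "\<And>i. minimal_projection (p i)"
    and "\<And>i j. i \<noteq> j \<Longrightarrow> p i ** p j = 0"
    and "\<And>a. cmat_adj (\<Delta> (cmat_adj a)) = \<Delta> a"
    and "\<And>a. \<Delta> ((mat 1 - p k) ** a) = 0"
  shows "\<And>a. \<Delta> ((mat 1 - p k) ** a + p k ** a ** (mat 1 - p k)) = 0"
proof -
  fix a
  have proj: "is_projection (p k)"
    using assms(2) unfolding minimal_projection_def by blast
  then have "cmat_adj (mat 1 - p k) = mat 1 - p k"
    by (simp add: cmat_adj_diff is_projection_def)
  then have "\<Delta> (b ** (mat 1 - p k)) = 0" for b
    using symmetric_map_vanishes_right_mult[OF assms(4) _ assms(5)] by blast
  then interpret weak_2_local_derivation_vanishing_beside \<Delta> "p k"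
    using assms(1,5) proj by unfold_locales (simp_all add: is_projection_def)
  show "\<Delta> ((mat 1 - p k) ** a + p k ** a ** (mat 1 - p k)) = 0"
    using minimal_projection_corner_eq_0[OF assms(2) value_in_corner[symmetric] trace_vanishes]
    by (simp add: Q_def)
qed

end
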